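(* Let $P$ be a prismatoid. Then the top and the bottom of $P$ are Minkowski equivalent.
   Context: A $d$-dimensional prism is a polytope affinely equivalent to $Q \times [0,1]$ for some $(d-1)$-dimensional polytope $Q$; its top and bottom facets are the images of $Q\times\{1\}$ and $Q \times \{0\}$. A prismatoid is a polytope whose face lattice is isomorphic to that of a prism and such that the two facets corresponding to the top and bottom facets of the prism (called the top and bottom of the prismatoid) are parallel. Two faces $F,G$ are parallel if $\mathrm{lin}(F)=\mathrm{lin}(G)$, where $\mathrm{lin}(F)$ is the linear subspace parallel to the affine hull of $F$. Two polytopes are Minkowski equivalent if they have the same normal fan. *)

theory Defs
  imports "HOL-Analysis.Analysis"
begin

definition lin :: "'a::euclidean_space set \<Rightarrow> 'a set" where
  "lin F = span {x - y | x y. x \<in> F \<and> y \<in> F}"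

definition parallel_faces :: "'a::euclidean_space set \<Rightarrow> 'a set \<Rightarrow> bool" where
  "parallel_faces F G \<longleftrightarrow> lin F = lin G"

definition face_lattice_iso ::
  "'a::euclidean_space set \<Rightarrow> 'b::euclidean_space set \<Rightarrow> ('a set \<Rightarrow> 'b set) \<Rightarrow> bool" where
  "face_lattice_iso P R f \<longleftrightarrow>
     bij_betw f {F. F face_of P} {G. G face_of R} \<and>
     (\<forall>F\<in>{F. F face_of P}. \<forall>F'\<in>{F. F face_of P}. F \<subseteq> F' \<longleftrightarrow> f F \<subseteq> f F')"

text \<open>P is a prismatoid with top T and bottom B: there is a nonempty polytope Q
  and a face lattice isomorphism from P to the prism Q \<times> [0,1] sending T to
  Q \<times> {1} and B to Q \<times> {0}; moreover T and B are parallel.  (Q may be taken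
  in the ambient space of P, since dim Q = dim P - 1.)\<close>
definition prismatoid_with :: "'a::euclidean_space set \<Rightarrow> 'a set \<Rightarrow> 'a set \<Rightarrow> bool" where
  "prismatoid_with P T B \<longleftrightarrow> polytope P \<and>
     (\<exists>(Q::'a set) (f :: 'a set \<Rightarrow> ('a \<times> real) set).
        polytope Q \<and> Q \<noteq> {} \<and>
        face_lattice_iso P (Q \<times> {0..1}) f \<and>
        T face_of P \<and> B face_of P \<and>
        f T = Q \<times> {1} \<and> f B = Q \<times> {0}) \<and>
     parallel_faces T B"

definition normal_cone :: "'a::euclidean_space set \<Rightarrow> 'a set \<Rightarrow> 'a set" where
  "normal_cone P F = {c. \<forall>x\<in>F. \<forall>y\<in>P. inner c y \<le> inner c x}"

definition normal_fan :: "'a::euclidean_space set \<Rightarrow> 'a set set" where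
  "normal_fan P = {normal_cone P F | F. F face_of P \<and> F \<noteq> {}}"

definition minkowski_equivalent :: "'a::euclidean_space set \<Rightarrow> 'a set \<Rightarrow> bool" where
  "minkowski_equivalent P R \<longleftrightarrow> normal_fan P = normal_fan R"

end

theory Submission
  imports Defs
begin

text \<open>Every vertex of the prism lies in its top or bottom, so every vertex of P lies in T or B
  and P is the convex hull of T \<union> B. As T is a proper face of P parallel to B, the faces T and B
  lie in two distinct parallel hyperplanes z \<bullet> x = \<alpha> and z \<bullet> x = \<beta>. Tilting a direction c by a
  suitable multiple of z gives a functional supporting P in a face \<Phi> that meets T and B exactly in
  their c-maximal faces. The face lattice isomorphism sends \<Phi> to a product X \<times> I, hence the
  c-maximal faces of T and B to X \<times> {1} and X \<times> {0}. So a face of T and the face of B lying over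
  the same face of Q are maximal for the same directions: they have the same normal cone.\<close>

definition max_face :: "'a::real_inner \<Rightarrow> 'a set \<Rightarrow> 'a set" where
  "max_face c S = {x \<in> S. \<forall>y \<in> S. c \<bullet> y \<le> c \<bullet> x}"

lemma normal_cone_iff_subset_max_face:
  "F \<subseteq> S \<Longrightarrow> c \<in> normal_cone S F \<longleftrightarrow> F \<subseteq> max_face c S"
  by (auto simp: normal_cone_def max_face_def)

lemma max_face_face_of:
  assumes "convex S"
  shows "max_face c S face_of S"
proof (cases "max_face c S = {}")
  case False
  then obtain x0 where x0: "x0 \<in> max_face c S" by blast
  then have "max_face c S = S \<inter> {x. c \<bullet> x = c \<bullet> x0}"
    by (force simp: max_face_def)
  moreover have "S \<inter> {x. c \<bullet> x = c \<bullet> x0} face_of S"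
    using x0 by (intro face_of_Int_supporting_hyperplane_le assms) (auto simp: max_face_def)
  ultimately show ?thesis by simp
qed simp

lemma max_face_level:
  fixes S :: "'a::real_inner set"
  assumes "compact S" "S \<noteq> {}"
  obtains m where "\<And>x. x \<in> S \<Longrightarrow> c \<bullet> x \<le> m" "max_face c S = {x \<in> S. c \<bullet> x = m}"
    "max_face c S \<noteq> {}"
proof -
  obtain x0 where "x0 \<in> S" "\<And>y. y \<in> S \<Longrightarrow> c \<bullet> y \<le> c \<bullet> x0"
    using continuous_attains_sup[OF assms, of "\<lambda>x. c \<bullet> x"]
      continuous_on_inner[OF continuous_on_const continuous_on_id] by blast
  then show ?thesis
    by (intro that[of "c \<bullet> x0"]) (force simp: max_face_def)+
qed

lemma tilted_supporting_hyperplane: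
  fixes T B :: "'a::real_inner set"
  assumes "compact T" "T \<noteq> {}" "compact B" "B \<noteq> {}"
    and "\<And>x. x \<in> T \<Longrightarrow> z \<bullet> x = \<alpha>" "\<And>x. x \<in> B \<Longrightarrow> z \<bullet> x = \<beta>" "\<alpha> \<noteq> \<beta>"
  obtains w M where "\<And>x. x \<in> T \<union> B \<Longrightarrow> w \<bullet> x \<le> M"
    "{x \<in> T. w \<bullet> x = M} = max_face c T" "{x \<in> B. w \<bullet> x = M} = max_face c B"
proof -
  obtain mT where mT: "\<And>x. x \<in> T \<Longrightarrow> c \<bullet> x \<le> mT" "max_face c T = {x \<in> T. c \<bullet> x = mT}"
    using max_face_level[OF assms(1,2)] by metis
  obtain mB where mB: "\<And>x. x \<in> B \<Longrightarrow> c \<bullet> x \<le> mB" "max_face c B = {x \<in> B. c \<bullet> x = mB}"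
    using max_face_level[OF assms(3,4)] by metis
  define k where "k = (mB - mT) / (\<alpha> - \<beta>)"
  have "k * \<beta> = k * \<alpha> - (mB - mT)"
    using assms(7) by (simp add: k_def field_simps)
  then have "(c + k *\<^sub>R z) \<bullet> x = c \<bullet> x + (mT + k * \<alpha>) - mB" if "x \<in> B" for x
    using assms(6)[OF that] by (simp add: inner_add_left)
  moreover have "(c + k *\<^sub>R z) \<bullet> x = c \<bullet> x + (mT + k * \<alpha>) - mT" if "x \<in> T" for x
    using assms(5)[OF that] by (simp add: inner_add_left)
  ultimately show ?thesis
    by (intro that[of "c + k *\<^sub>R z" "mT + k * \<alpha>"]) (use mT mB in fastforce)+
qed

lemma diff_mem_lin: "x \<in> S \<Longrightarrow> y \<in> S \<Longrightarrow> x - y \<in> lin S"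
  unfolding lin_def by (auto intro: span_base)

lemma lin_subset_affine_hull_diffs:
  fixes S :: "'a::euclidean_space set"
  assumes "a \<in> S"
  shows "lin S \<subseteq> (\<lambda>x. x - a) ` (affine hull S)"
  unfolding lin_def
proof (rule span_minimal)
  show "subspace ((\<lambda>x. x - a) ` (affine hull S))"
    using assms by (intro affine_diffs_subspace_subtract affine_affine_hull hull_inc)
  have "a + 1 *\<^sub>R (x - y) \<in> affine hull S" if "x \<in> S" "y \<in> S" for x y
    using assms that by (intro mem_affine_3_minus affine_affine_hull hull_inc)
  then show "{x - y |x y. x \<in> S \<and> y \<in> S} \<subseteq> (\<lambda>x. x - a) ` (affine hull S)"
    by (force intro: image_eqI[where x = "a + _"])
qed

lemma subset_affine_hull_if_diff_mem_lin:
  fixes T B :: "'a::euclidean_space set"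
  assumes "lin B = lin T" "a \<in> T" "b \<in> B" "a - b \<in> lin T"
  shows "B \<subseteq> affine hull T"
proof
  fix x
  assume "x \<in> B"
  then have "x - b \<in> lin T"
    using assms(1) diff_mem_lin[OF _ assms(3)] by blast
  then have "(x - b) - (a - b) \<in> lin T"
    using assms(4) unfolding lin_def by (rule span_diff)
  then show "x \<in> affine hull T"
    using lin_subset_affine_hull_diffs[OF assms(2)] by auto
qed

lemma parallel_sets_in_parallel_hyperplanes:
  fixes T B :: "'a::euclidean_space set"
  assumes "lin T = lin B" "a \<in> T" "b \<in> B" "\<not> B \<subseteq> affine hull T"
  obtains z where "\<And>x. x \<in> T \<Longrightarrow> z \<bullet> x = z \<bullet> a" "\<And>x. x \<in> B \<Longrightarrow> z \<bullet> x = z \<bullet> b"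
    "z \<bullet> b < z \<bullet> a"
proof -
  have "a - b \<notin> lin T"
    using subset_affine_hull_if_diff_mem_lin[of B T a b] assms by metis
  obtain y z where yz: "y \<in> lin T" "\<And>w. w \<in> lin T \<Longrightarrow> orthogonal z w" "a - b = y + z"
    using orthogonal_subspace_decomp_exists[of "{x - y |x y. x \<in> T \<and> y \<in> T}" "a - b"]
    unfolding lin_def by blast
  have z_orth: "z \<bullet> v = 0" if "v \<in> lin T" for v
    using yz(2)[OF that] by (simp add: orthogonal_def)
  have "z \<noteq> 0"
  proof
    assume "z = 0"
    then have "a - b \<in> lin T"
      using yz(1,3) by simp
    with \<open>a - b \<notin> lin T\<close> show False ..
  qed
  show ?thesis
  proof
    show "z \<bullet> x = z \<bullet> a" if "x \<in> T" for x
      using z_orth[OF diff_mem_lin[OF that assms(2)]] by (simp add: inner_diff_right)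
    show "z \<bullet> x = z \<bullet> b" if "x \<in> B" for x
    proof -
      have "x - b \<in> lin T"
        using diff_mem_lin[OF that assms(3)] assms(1) by simp
      then show ?thesis
        using z_orth[of "x - b"] by (simp add: inner_diff_right)
    qed
    have "z \<bullet> a - z \<bullet> b = z \<bullet> z"
      using z_orth[OF yz(1)] yz(3) by (simp add: inner_add_right flip: inner_diff_right)
    moreover have "0 < z \<bullet> z"
      using \<open>z \<noteq> 0\<close> by simp
    ultimately show "z \<bullet> b < z \<bullet> a"
      by linarith
  qed
qed

lemma face_of_unit_interval_endpoint:
  assumes "I face_of {0..1::real}" "I \<noteq> {}"
  shows "0 \<in> I \<or> 1 \<in> I"
proof -
  obtain p where p: "p \<in> I"
    using assms(2) by blast
  then have "p \<in> {0..1}"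
    using face_of_imp_subset[OF assms(1)] by blast
  then consider "p = 0" | "p = 1" | "p \<in> open_segment 0 1"
    by (force simp: open_segment_eq_real_ivl)
  then show ?thesis
    using face_ofD[OF assms(1) _ _ _ p] p by cases auto
qed

lemma endpoint_face_of_unit_interval: "s \<in> {0, 1} \<Longrightarrow> {s} face_of {0..1::real}"
  by (auto simp: face_of_singleton extreme_point_of_def open_segment_eq_real_ivl)

locale face_iso =
  fixes P :: "'a::euclidean_space set" and R :: "'b::euclidean_space set"
    and f :: "'a set \<Rightarrow> 'b set"
  assumes iso: "face_lattice_iso P R f"
begin

lemma face_of_f: "F face_of P \<Longrightarrow> f F face_of R"
  using iso unfolding face_lattice_iso_def bij_betw_def by auto

lemma f_preimageE:
  assumes "G face_of R"
  obtains F where "F face_of P" "f F = G"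
proof -
  have "G \<in> f ` {F. F face_of P}"
    using assms iso unfolding face_lattice_iso_def bij_betw_def by simp
  then show ?thesis
    using that by blast
qed

lemma f_subset_iff: "F face_of P \<Longrightarrow> F' face_of P \<Longrightarrow> f F \<subseteq> f F' \<longleftrightarrow> F \<subseteq> F'"
  using iso unfolding face_lattice_iso_def by auto

lemma f_empty: "f {} = {}"
proof -
  obtain F where "F face_of P" "f F = {}"
    using f_preimageE[of "{}"] by auto
  then show ?thesis
    using f_subset_iff[of "{}" F] by auto
qed

lemma f_eq_empty_iff: "F face_of P \<Longrightarrow> f F = {} \<longleftrightarrow> F = {}"
  using f_subset_iff[of F "{}"] f_empty by auto

lemma f_Int:
  assumes A: "A face_of P" and C: "C face_of P"
  shows "f (A \<inter> C) = f A \<inter> f C"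
proof -
  have AC: "A \<inter> C face_of P"
    using face_of_Int[OF A C] .
  obtain X where X: "X face_of P" "f X = f A \<inter> f C"
    using face_of_Int[OF face_of_f[OF A] face_of_f[OF C]] by (rule f_preimageE)
  have "X \<subseteq> A \<inter> C"
    using f_subset_iff[OF X(1) A] f_subset_iff[OF X(1) C] X(2) by auto
  then show ?thesis
    using f_subset_iff[OF X(1) AC] f_subset_iff[OF AC A] f_subset_iff[OF AC C] X(2) by auto
qed

end

text \<open>The endpoints s and t of the top and bottom are kept symmetric, so that the roles of T and B
  can be exchanged by a second interpretation.\<close>

locale prismatoid_faces = face_iso P "Q \<times> {0..1::real}" f
  for P :: "'a::euclidean_space set" and Q :: "'c::euclidean_space set" and f +
  fixes T B :: "'a set" and s t :: real
  assumes compact_P: "compact P" and convex_P: "convex P" and Q_ne: "Q \<noteq> {}"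
    and T: "T face_of P" and B: "B face_of P"
    and f_T: "f T = Q \<times> {s}" and f_B: "f B = Q \<times> {t}"
    and endpoints: "{s, t} = {0, 1}" and lin_T_B: "lin T = lin B"
begin

lemma T_ne: "T \<noteq> {}"
  using f_eq_empty_iff[OF T] f_T Q_ne by auto

lemma B_ne: "B \<noteq> {}"
  using f_eq_empty_iff[OF B] f_B Q_ne by auto

lemma compact_T: "compact T"
  using face_of_imp_compact[OF convex_P compact_P T] .

lemma compact_B: "compact B"
  using face_of_imp_compact[OF convex_P compact_P B] .

lemma T_neq_P: "T \<noteq> P"
proof
  assume "T = P"
  then have "f B \<subseteq> f T"
    using f_subset_iff[OF B T] face_of_imp_subset[OF B] by simp
  then have "t = s"
    using f_T f_B Q_ne by auto
  then show False
    using endpoints by auto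
qed

lemma face_meets_T_or_B:
  assumes F: "F face_of P" "F \<noteq> {}"
  shows "F \<inter> T \<noteq> {} \<or> F \<inter> B \<noteq> {}"
proof -
  obtain X I where X: "X face_of Q" "I face_of {0..1}" "f F = X \<times> I"
    using face_of_f[OF F(1)] face_of_Times_decomp by blast
  have "X \<times> I \<noteq> {}"
    using f_eq_empty_iff[OF F(1)] F(2) X(3) by simp
  then have "s \<in> I \<or> t \<in> I"
    using face_of_unit_interval_endpoint[OF X(2)] endpoints by auto
  then have "f (F \<inter> T) \<noteq> {} \<or> f (F \<inter> B) \<noteq> {}"
    using f_Int[OF F(1) T] f_Int[OF F(1) B] f_T f_B X(3) face_of_imp_subset[OF X(1)]
      \<open>X \<times> I \<noteq> {}\<close> by auto
  then show ?thesis
    using f_empty by auto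
qed

lemma P_eq_hull_T_B: "P = convex hull (T \<union> B)"
proof
  have extreme: "x \<in> T \<union> B" if "x extreme_point_of P" for x
  proof -
    have "{x} face_of P"
      using that face_of_singleton by blast
    then show ?thesis
      using face_meets_T_or_B by blast
  qed
  have "P = convex hull {x. x extreme_point_of P}"
    by (rule Krein_Milman_Minkowski[OF compact_P convex_P])
  also have "\<dots> \<subseteq> convex hull (T \<union> B)"
    using extreme by (intro hull_mono) blast
  finally show "P \<subseteq> convex hull (T \<union> B)" .
  show "convex hull (T \<union> B) \<subseteq> P"
    using face_of_imp_subset[OF T] face_of_imp_subset[OF B] convex_P by (intro hull_minimal) auto
qed

lemma B_not_subset_affine_hull_T: "\<not> B \<subseteq> affine hull T"
proof
  assume "B \<subseteq> affine hull T"
  then have "convex hull (T \<union> B) \<subseteq> affine hull T"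
    by (intro hull_minimal) (auto simp: hull_inc affine_imp_convex)
  then have "aff_dim P \<le> aff_dim T"
    using P_eq_hull_T_B aff_dim_subset by (metis aff_dim_affine_hull)
  moreover have "aff_dim T < aff_dim P"
    using face_of_aff_dim_lt[OF convex_P T T_neq_P] .
  ultimately show False
    by simp
qed

lemma f_Int_slice:
  assumes "F face_of P" "G face_of P" "f G = Q \<times> {r}" "F \<inter> G \<noteq> {}"
    and "f F = X \<times> I" "X \<subseteq> Q"
  shows "f (F \<inter> G) = X \<times> {r}"
proof -
  have "f (F \<inter> G) = (X \<times> I) \<inter> (Q \<times> {r})"
    using f_Int[OF assms(1,2)] assms(3,5) by simp
  moreover have "f (F \<inter> G) \<noteq> {}"
    using f_eq_empty_iff[OF face_of_Int[OF assms(1,2)]] assms(4) by simp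
  ultimately show ?thesis
    using assms(6) by auto
qed

lemma f_max_faces:
  obtains X where "f (max_face c T) = X \<times> {s}" "f (max_face c B) = X \<times> {t}"
proof -
  obtain a b where "a \<in> T" "b \<in> B"
    using T_ne B_ne by blast
  then obtain z where z: "\<And>x. x \<in> T \<Longrightarrow> z \<bullet> x = z \<bullet> a" "\<And>x. x \<in> B \<Longrightarrow> z \<bullet> x = z \<bullet> b"
    "z \<bullet> b < z \<bullet> a"
    using parallel_sets_in_parallel_hyperplanes lin_T_B B_not_subset_affine_hull_T by metis
  then have "z \<bullet> a \<noteq> z \<bullet> b"
    by simp
  then obtain w M where wM: "\<And>x. x \<in> T \<union> B \<Longrightarrow> w \<bullet> x \<le> M"
    "{x \<in> T. w \<bullet> x = M} = max_face c T" "{x \<in> B. w \<bullet> x = M} = max_face c B"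
    using tilted_supporting_hyperplane[OF compact_T T_ne compact_B B_ne z(1,2)] by blast
  define \<Phi> where "\<Phi> = P \<inter> {x. w \<bullet> x = M}"
  have "convex hull (T \<union> B) \<subseteq> {x. w \<bullet> x \<le> M}"
    using wM(1) by (intro hull_minimal) (auto simp: convex_halfspace_le)
  then have \<Phi>: "\<Phi> face_of P"
    unfolding \<Phi>_def using P_eq_hull_T_B by (intro face_of_Int_supporting_hyperplane_le convex_P) auto
  obtain X I where X: "X face_of Q" "f \<Phi> = X \<times> I"
    using face_of_f[OF \<Phi>] face_of_Times_decomp by blast
  have "\<Phi> \<inter> T = max_face c T" "\<Phi> \<inter> B = max_face c B"
    using wM(2,3) face_of_imp_subset[OF T] face_of_imp_subset[OF B] by (auto simp: \<Phi>_def)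
  moreover have "max_face c T \<noteq> {}" "max_face c B \<noteq> {}"
    using max_face_level[OF compact_T T_ne] max_face_level[OF compact_B B_ne] by metis+
  ultimately show ?thesis
    using that f_Int_slice[OF \<Phi> T f_T _ X(2) face_of_imp_subset[OF X(1)]]
      f_Int_slice[OF \<Phi> B f_B _ X(2) face_of_imp_subset[OF X(1)]] by simp
qed

lemma corresponding_face_of_B:
  assumes "F face_of T" "F \<noteq> {}"
  obtains X F' where "f F = X \<times> {s}" "F' face_of B" "F' \<noteq> {}" "f F' = X \<times> {t}"
proof -
  have FP: "F face_of P"
    using face_of_trans[OF assms(1) T] .
  obtain X I where X: "X face_of Q" "f F = X \<times> I"
    using face_of_f[OF FP] face_of_Times_decomp by blast
  have "F \<inter> T = F"
    using face_of_imp_subset[OF assms(1)] by blast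
  then have f_F: "f F = X \<times> {s}"
    using f_Int_slice[OF FP T f_T _ X(2) face_of_imp_subset[OF X(1)]] assms(2) by simp
  then have "X \<noteq> {}"
    using f_eq_empty_iff[OF FP] assms(2) by simp
  have "{t} face_of {0..1}"
    using endpoints by (intro endpoint_face_of_unit_interval) auto
  then have "X \<times> {t} face_of Q \<times> {0..1}"
    using X(1) by (simp add: face_of_Times_eq)
  then obtain F' where F': "F' face_of P" "f F' = X \<times> {t}"
    by (rule f_preimageE)
  have "F' \<subseteq> B"
    using f_subset_iff[OF F'(1) B] F'(2) f_B face_of_imp_subset[OF X(1)] by auto
  then have "F' face_of B"
    using face_of_subset[OF F'(1) _ face_of_imp_subset[OF B]] by blast
  moreover have "F' \<noteq> {}"
    using f_eq_empty_iff[OF F'(1)] F'(2) \<open>X \<noteq> {}\<close> by simp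
  ultimately show ?thesis
    using that f_F F'(2) by blast
qed

lemma normal_cone_eq_over_same_face:
  assumes F: "F face_of T" and F': "F' face_of B"
    and f_F: "f F = X \<times> {s}" and f_F': "f F' = X \<times> {t}"
  shows "normal_cone T F = normal_cone B F'"
proof (rule set_eqI)
  fix c
  obtain G where G: "f (max_face c T) = G \<times> {s}" "f (max_face c B) = G \<times> {t}"
    by (rule f_max_faces)
  have FP: "F face_of P" and F'P: "F' face_of P"
    using face_of_trans[OF F T] face_of_trans[OF F' B] .
  have max_T: "max_face c T face_of P" and max_B: "max_face c B face_of P"
    using face_of_trans[OF max_face_face_of[OF face_of_imp_convex[OF T]] T]
      face_of_trans[OF max_face_face_of[OF face_of_imp_convex[OF B]] B] .
  have "c \<in> normal_cone T F \<longleftrightarrow> F \<subseteq> max_face c T"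
    using normal_cone_iff_subset_max_face[OF face_of_imp_subset[OF F]] .
  also have "\<dots> \<longleftrightarrow> X \<subseteq> G"
    using f_subset_iff[OF FP max_T] f_F G(1) by auto
  also have "\<dots> \<longleftrightarrow> F' \<subseteq> max_face c B"
    using f_subset_iff[OF F'P max_B] f_F' G(2) by auto
  also have "\<dots> \<longleftrightarrow> c \<in> normal_cone B F'"
    using normal_cone_iff_subset_max_face[OF face_of_imp_subset[OF F']] by simp
  finally show "c \<in> normal_cone T F \<longleftrightarrow> c \<in> normal_cone B F'" .
qed

lemma normal_fan_T_subset_B: "normal_fan T \<subseteq> normal_fan B"
proof
  fix N
  assume "N \<in> normal_fan T"
  then obtain F where F: "F face_of T" "F \<noteq> {}" and N: "N = normal_cone T F"
    unfolding normal_fan_def by blast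
  obtain X F' where "f F = X \<times> {s}" "F' face_of B" "F' \<noteq> {}" "f F' = X \<times> {t}"
    using corresponding_face_of_B[OF F] .
  then show "N \<in> normal_fan B"
    unfolding normal_fan_def N using normal_cone_eq_over_same_face[OF F(1)] by blast
qed

end

theorem lemma4p1:
  fixes P T B :: "'a::euclidean_space set"
  assumes "prismatoid_with P T B"
  shows "minkowski_equivalent T B"
proof -
  obtain Q :: "'a set" and f :: "'a set \<Rightarrow> ('a \<times> real) set" where
    "polytope P" "Q \<noteq> {}" "face_lattice_iso P (Q \<times> {0..1}) f"
    "T face_of P" "B face_of P" "f T = Q \<times> {1}" "f B = Q \<times> {0}" "lin T = lin B"
    using assms unfolding prismatoid_with_def parallel_faces_def by blast
  then interpret top: prismatoid_faces P Q f T B 1 0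
    + bottom: prismatoid_faces P Q f B T 0 1
    by unfold_locales (auto simp: polytope_imp_compact polytope_imp_convex)
  show ?thesis
    unfolding minkowski_equivalent_def
    using top.normal_fan_T_subset_B bottom.normal_fan_T_subset_B by blast
qed

end
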